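(* Let $h_6$ be the real two-photon Lie algebra. A Lie bialgebra structure $\delta$ on $h_6$ satisfies $\delta(N)=0$ if and only if there exist real numbers $c_1,c_2$ such that $\delta(X)=[1\otimes X+X\otimes 1,\,r]$ for all $X\in h_6$, with $$r=c_1\,N\wedge M+c_2\,A_+\wedge A_- .$$ Explicitly, $\delta(N)=\delta(M)=0$, $\delta(A_+)=-(c_1+c_2)A_+\wedge M$, $\delta(A_-)=(c_1-c_2)A_-\wedge M$, $\delta(B_+)=-2c_1B_+\wedge M$, $\delta(B_-)=2c_1B_-\wedge M$. Moreover, for this $r$ one has $[[r,r]]=-c_2^2\,A_+\wedge A_-\wedge M$, so $r$ is a solution of the classical Yang–Baxter equation (non-standard case) if and only if $c_2=0$, and is standard (nonzero Schouten bracket, satisfying only the modified classical Yang–Baxter equation) if and only if $c_2\neq 0$.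
   Context: The two-photon Lie algebra $h_6$ is the real Lie algebra with basis $\{N,A_+,A_-,B_+,B_-,M\}$ and brackets $[N,A_+]=A_+$, $[N,A_-]=-A_-$, $[A_-,A_+]=M$, $[N,B_+]=2B_+$, $[N,B_-]=-2B_-$, $[B_-,B_+]=4N+2M$, $[A_+,B_-]=-2A_-$, $[A_+,B_+]=0$, $[A_-,B_+]=2A_+$, $[A_-,B_-]=0$, and $M$ central. A Lie bialgebra structure on a Lie algebra $g$ is a linear map $\delta:g\to g\otimes g$ which is a 1-cocycle, i.e. $\delta([X,Y])=[\delta(X),1\otimes Y+Y\otimes 1]+[1\otimes X+X\otimes 1,\delta(Y)]$, and whose dual map $g^*\otimes g^*\to g^*$ is a Lie bracket. For $r\in g\wedge g$, $r=\sum r^{ij}X_i\otimes X_j$, the Schouten bracket is $[[r,r]]=[r_{12},r_{13}]+[r_{12},r_{23}]+[r_{13},r_{23}]$, with $r_{12}=\sum r^{ij}X_i\otimes X_j\otimes 1$, $r_{13}=\sum r^{ij}X_i\otimes 1\otimes X_j$, $r_{23}=\sum r^{ij}1\otimes X_i\otimes X_j$; the classical Yang–Baxter equation is $[[r,r]]=0$. Here $X\wedge Y=X\otimes Y-Y\otimes X$. *)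

theory Defs
  imports Complex_Main
begin

text \<open>Basis N, A+, A-, B+, B-, M (written N, Ap, Am, Bp, Bm, M).
  Elements of h6 are coordinate functions gen => real, elements of h6 (x) h6 are
  coefficient arrays gen => gen => real (coefficient of e_j (x) e_k), and likewise
  for the triple tensor product.\<close>

datatype gen = N | Ap | Am | Bp | Bm | M

lemma UNIV_gen: "(UNIV :: gen set) = {N, Ap, Am, Bp, Bm, M}"
  by (auto intro: gen.exhaust)

instance gen :: finite
  by standard (simp add: UNIV_gen)

type_synonym vec = "gen \<Rightarrow> real"
type_synonym tensor2 = "gen \<Rightarrow> gen \<Rightarrow> real"
type_synonym tensor3 = "gen \<Rightarrow> gen \<Rightarrow> gen \<Rightarrow> real"

definition bas :: "gen \<Rightarrow> vec" where
  "bas a = (\<lambda>b. if b = a then 1 else 0)"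

fun brb :: "gen \<Rightarrow> gen \<Rightarrow> vec" where
  "brb N Ap = bas Ap"
| "brb Ap N = (\<lambda>t. - bas Ap t)"
| "brb N Am = (\<lambda>t. - bas Am t)"
| "brb Am N = bas Am"
| "brb Am Ap = bas M"
| "brb Ap Am = (\<lambda>t. - bas M t)"
| "brb N Bp = (\<lambda>t. 2 * bas Bp t)"
| "brb Bp N = (\<lambda>t. -2 * bas Bp t)"
| "brb N Bm = (\<lambda>t. -2 * bas Bm t)"
| "brb Bm N = (\<lambda>t. 2 * bas Bm t)"
| "brb Bm Bp = (\<lambda>t. 4 * bas N t + 2 * bas M t)"
| "brb Bp Bm = (\<lambda>t. -4 * bas N t - 2 * bas M t)"
| "brb Ap Bm = (\<lambda>t. -2 * bas Am t)"
| "brb Bm Ap = (\<lambda>t. 2 * bas Am t)"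
| "brb Am Bp = (\<lambda>t. 2 * bas Ap t)"
| "brb Bp Am = (\<lambda>t. -2 * bas Ap t)"
| "brb _ _ = (\<lambda>t. 0)"

definition lie :: "vec \<Rightarrow> vec \<Rightarrow> vec" where
  "lie x y = (\<lambda>t. \<Sum>a\<in>UNIV. \<Sum>b\<in>UNIV. x a * y b * brb a b t)"

definition tensor :: "vec \<Rightarrow> vec \<Rightarrow> tensor2" where
  "tensor x y = (\<lambda>j k. x j * y k)"

definition wedge :: "vec \<Rightarrow> vec \<Rightarrow> tensor2" where
  "wedge x y = (\<lambda>j k. x j * y k - y j * x k)"

definition wedge3 :: "vec \<Rightarrow> vec \<Rightarrow> vec \<Rightarrow> tensor3" where
  "wedge3 x y z = (\<lambda>i j k.
      x i * y j * z k + y i * z j * x k + z i * x j * y k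
    - y i * x j * z k - x i * z j * y k - z i * y j * x k)"

text \<open>Adjoint action [1(x)X + X(x)1, T] on g (x) g, so that
  [T, 1(x)X + X(x)1] = - adt X T.\<close>
definition adt :: "vec \<Rightarrow> tensor2 \<Rightarrow> tensor2" where
  "adt X T = (\<lambda>j k. (\<Sum>a\<in>UNIV. T a k * lie X (bas a) j)
                  + (\<Sum>b\<in>UNIV. T j b * lie X (bas b) k))"

text \<open>Adjoint action [1(x)1(x)X + 1(x)X(x)1 + X(x)1(x)1, T] on g (x) g (x) g.\<close>
definition adt3 :: "vec \<Rightarrow> tensor3 \<Rightarrow> tensor3" where
  "adt3 X T = (\<lambda>i j k. (\<Sum>a\<in>UNIV. T a j k * lie X (bas a) i)
                    + (\<Sum>a\<in>UNIV. T i a k * lie X (bas a) j)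
                    + (\<Sum>a\<in>UNIV. T i j a * lie X (bas a) k))"

definition cob :: "tensor2 \<Rightarrow> vec \<Rightarrow> tensor2" where
  "cob r X = adt X r"

text \<open>Schouten bracket [[r,r]] = [r12,r13] + [r12,r23] + [r13,r23].\<close>
definition schouten :: "tensor2 \<Rightarrow> tensor3" where
  "schouten r = (\<lambda>x y z. \<Sum>i\<in>UNIV. \<Sum>j\<in>UNIV. \<Sum>k\<in>UNIV. \<Sum>l\<in>UNIV. r i j * r k l *
      ( brb i k x * bas j y * bas l z
      + bas i x * brb j k y * bas l z
      + bas i x * bas k y * brb j l z))"

definition CYBE :: "tensor2 \<Rightarrow> bool" where
  "CYBE r \<longleftrightarrow> schouten r = (\<lambda>x y z. 0)"

definition standard_r :: "tensor2 \<Rightarrow> bool" where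
  "standard_r r \<longleftrightarrow> schouten r \<noteq> (\<lambda>x y z. 0) \<and>
      (\<forall>X. adt3 X (schouten r) = (\<lambda>x y z. 0))"

definition linear_delta :: "(vec \<Rightarrow> tensor2) \<Rightarrow> bool" where
  "linear_delta \<delta> \<longleftrightarrow>
     (\<forall>x y. \<delta> (\<lambda>i. x i + y i) = (\<lambda>j k. \<delta> x j k + \<delta> y j k)) \<and>
     (\<forall>c x. \<delta> (\<lambda>i. c * x i) = (\<lambda>j k. c * \<delta> x j k))"

definition cocycle :: "(vec \<Rightarrow> tensor2) \<Rightarrow> bool" where
  "cocycle \<delta> \<longleftrightarrow> (\<forall>X Y. \<delta> (lie X Y) = (\<lambda>j k. - adt Y (\<delta> X) j k + adt X (\<delta> Y) j k))"

text \<open>The dual map g* (x) g* -> g*, (xi, eta) |-> (xi (x) eta) o delta, with g* in the dual coordinates.\<close>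
definition dual_br :: "(vec \<Rightarrow> tensor2) \<Rightarrow> vec \<Rightarrow> vec \<Rightarrow> vec" where
  "dual_br \<delta> \<xi> \<eta> = (\<lambda>i. \<Sum>j\<in>UNIV. \<Sum>k\<in>UNIV. \<delta> (bas i) j k * \<xi> j * \<eta> k)"

text \<open>The dual map is a Lie bracket (it is bilinear by construction): alternating and Jacobi.\<close>
definition dual_is_lie :: "(vec \<Rightarrow> tensor2) \<Rightarrow> bool" where
  "dual_is_lie \<delta> \<longleftrightarrow>
     (\<forall>\<xi>. dual_br \<delta> \<xi> \<xi> = (\<lambda>i. 0)) \<and>
     (\<forall>\<xi> \<eta> \<zeta>. (\<lambda>i. dual_br \<delta> \<xi> (dual_br \<delta> \<eta> \<zeta>) i + dual_br \<delta> \<eta> (dual_br \<delta> \<zeta> \<xi>) i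
                   + dual_br \<delta> \<zeta> (dual_br \<delta> \<xi> \<eta>) i) = (\<lambda>i. 0))"

definition lie_bialgebra :: "(vec \<Rightarrow> tensor2) \<Rightarrow> bool" where
  "lie_bialgebra \<delta> \<longleftrightarrow> linear_delta \<delta> \<and> cocycle \<delta> \<and> dual_is_lie \<delta>"

definition rr :: "real \<Rightarrow> real \<Rightarrow> tensor2" where
  "rr c1 c2 = (\<lambda>j k. c1 * wedge (bas N) (bas M) j k + c2 * wedge (bas Ap) (bas Am) j k)"

end

theory Submission
  imports Defs
begin

(* Since delta(N) = 0, the cocycle identity for the pair (N, X) says that delta commutes with ad N,
   so delta respects the grading of h6 by ad N-eigenvalues (N, M: 0, A+-: +-1, B+-: +-2).
   Together with skew-symmetry, which comes from the alternating dual bracket, a handful of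
   further cocycle identities leave a three-dimensional space: the coboundaries of N /\ M and
   A+ /\ A- and one extra cocycle. The Jacobi identity of the dual bracket is quadratic and forces
   the coefficient p of the extra cocycle to satisfy p^2 = 0. The claims about r are direct
   computations; A+ /\ A- /\ M is ad-invariant, which is why [[r,r]] always satisfies the
   modified classical Yang-Baxter equation. *)

lemma sum_UNIV_gen: "(\<Sum>a\<in>UNIV. f a) = f N + f Ap + f Am + f Bp + f Bm + (f M :: 'a :: comm_monoid_add)"
  by (simp add: UNIV_gen add_ac)

lemma bas_apply: "bas a b = (if b = a then 1 else 0)"
  by (simp add: bas_def)

lemma if_zero_mult: "(if P then a else 0) * (b :: 'a :: mult_zero) = (if P then a * b else 0)"
  by simp

lemma mult_if_zero: "(b :: 'a :: mult_zero) * (if P then a else 0) = (if P then b * a else 0)"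
  by simp

lemma sum_if_zero: "(\<Sum>k\<in>S. if P then f k else (0 :: 'a :: comm_monoid_add)) = (if P then \<Sum>k\<in>S. f k else 0)"
  by simp

lemma mult_bas_left: "bas a b * x = (if b = a then x else 0)"
  by (simp add: bas_def)

lemma mult_bas_right: "x * bas a b = (if b = a then x else 0)"
  by (simp add: bas_def)

lemmas bas_mult_simps = if_zero_mult mult_if_zero sum_if_zero mult_bas_left mult_bas_right

lemma lie_bas_right: "lie X (bas y) t = (\<Sum>b\<in>UNIV. X b * brb b y t)"
  by (simp add: lie_def bas_mult_simps)

lemma lie_bas: "lie (bas x) (bas y) = brb x y"
  by (rule ext) (simp add: lie_bas_right bas_mult_simps)

lemma schouten_eq: "schouten r x y z =
     (\<Sum>i\<in>UNIV. \<Sum>k\<in>UNIV. r i y * r k z * brb i k x)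
   + (\<Sum>j\<in>UNIV. \<Sum>k\<in>UNIV. r x j * r k z * brb j k y)
   + (\<Sum>j\<in>UNIV. \<Sum>l\<in>UNIV. r x j * r y l * brb j l z)"
  by (simp add: schouten_def sum.distrib distrib_left bas_mult_simps)

lemma dual_br_bas: "dual_br \<delta> (bas a) v i = (\<Sum>k\<in>UNIV. \<delta> (bas i) a k * v k)"
  by (simp add: dual_br_def bas_mult_simps)

lemma adt_bas: "adt (bas x) T j k = (\<Sum>a\<in>UNIV. T a k * brb x a j) + (\<Sum>b\<in>UNIV. T j b * brb x b k)"
  by (simp add: adt_def lie_bas)

definition weight :: "gen \<Rightarrow> real" where
  "weight a = (case a of N \<Rightarrow> 0 | Ap \<Rightarrow> 1 | Am \<Rightarrow> -1 | Bp \<Rightarrow> 2 | Bm \<Rightarrow> -2 | M \<Rightarrow> 0)"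

lemma brb_N_weight: "brb N a t = weight a * bas a t"
  by (cases a) (auto simp: weight_def bas_def)

lemma linear_delta_zero:
  assumes "linear_delta \<delta>"
  shows "\<delta> (\<lambda>i. 0) = (\<lambda>j k. 0)"
proof -
  have "\<delta> (\<lambda>i. 0 * X i) = (\<lambda>j k. 0 * \<delta> X j k)" for X
    using assms unfolding linear_delta_def by blast
  then show ?thesis
    by simp
qed

lemma linear_delta_sum:
  assumes lin: "linear_delta \<delta>" and "finite S"
  shows "\<delta> (\<lambda>i. \<Sum>a\<in>S. X a * bas a i) = (\<lambda>j k. \<Sum>a\<in>S. X a * \<delta> (bas a) j k)"
  using \<open>finite S\<close>
proof (induction S rule: finite_induct)
  case empty
  then show ?case by (simp add: linear_delta_zero[OF lin])
next
  case (insert x F)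
  have "\<delta> (\<lambda>i. \<Sum>a\<in>insert x F. X a * bas a i) = \<delta> (\<lambda>i. X x * bas x i + (\<Sum>a\<in>F. X a * bas a i))"
    using insert.hyps by simp
  also have "\<dots> = (\<lambda>j k. X x * \<delta> (bas x) j k + \<delta> (\<lambda>i. \<Sum>a\<in>F. X a * bas a i) j k)"
    using lin by (simp add: linear_delta_def)
  also have "\<dots> = (\<lambda>j k. \<Sum>a\<in>insert x F. X a * \<delta> (bas a) j k)"
    using insert.hyps by (simp add: insert.IH)
  finally show ?case .
qed

lemma sum_bas_eq: "(\<lambda>i. \<Sum>a\<in>UNIV. X a * bas a i) = X"
  by (simp add: bas_mult_simps)

lemma linear_delta_expand:
  assumes "linear_delta \<delta>"
  shows "\<delta> X j k = (\<Sum>a\<in>UNIV. X a * \<delta> (bas a) j k)"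
  using linear_delta_sum[OF assms, of UNIV X] by (simp add: sum_bas_eq)

lemma sum_mult_sum_swap:
  "(\<Sum>a\<in>UNIV. (f a :: 'a :: comm_semiring_0) * (\<Sum>c\<in>UNIV. X c * g c a)) = (\<Sum>c\<in>UNIV. X c * (\<Sum>a\<in>UNIV. f a * g c a))"
proof -
  have "(\<Sum>a\<in>UNIV. f a * (\<Sum>c\<in>UNIV. X c * g c a)) = (\<Sum>a\<in>UNIV. \<Sum>c\<in>UNIV. X c * (f a * g c a))"
    by (simp add: sum_distrib_left mult.left_commute)
  also have "\<dots> = (\<Sum>c\<in>UNIV. X c * (\<Sum>a\<in>UNIV. f a * g c a))"
    by (subst sum.swap) (simp add: sum_distrib_left)
  finally show ?thesis .
qed

lemma cob_expand: "cob r X j k = (\<Sum>a\<in>UNIV. X a * cob r (bas a) j k)"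
proof -
  have "cob r X j k = (\<Sum>a\<in>UNIV. r a k * (\<Sum>b\<in>UNIV. X b * brb b a j))
                    + (\<Sum>a\<in>UNIV. r j a * (\<Sum>b\<in>UNIV. X b * brb b a k))"
    unfolding cob_def adt_def lie_bas_right ..
  also have "\<dots> = (\<Sum>b\<in>UNIV. X b * (\<Sum>a\<in>UNIV. r a k * brb b a j))
                + (\<Sum>b\<in>UNIV. X b * (\<Sum>a\<in>UNIV. r j a * brb b a k))"
    by (rule arg_cong2[where f = "(+)"]; rule sum_mult_sum_swap)
  also have "\<dots> = (\<Sum>a\<in>UNIV. X a * cob r (bas a) j k)"
    by (simp only: cob_def adt_bas distrib_left sum.distrib)
  finally show ?thesis .
qed

lemma cocycle_bas:
  assumes "linear_delta \<delta>" and "cocycle \<delta>"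
  shows "(\<Sum>t\<in>UNIV. brb x y t * \<delta> (bas t) j k) = - adt (bas y) (\<delta> (bas x)) j k + adt (bas x) (\<delta> (bas y)) j k"
proof -
  have "\<delta> (lie (bas x) (bas y)) j k = - adt (bas y) (\<delta> (bas x)) j k + adt (bas x) (\<delta> (bas y)) j k"
    using \<open>cocycle \<delta>\<close> unfolding cocycle_def by metis
  then show ?thesis
    by (simp add: lie_bas linear_delta_expand[OF \<open>linear_delta \<delta>\<close>, of "brb x y"])
qed

lemma dual_br_alternating_imp_skew:
  assumes "\<And>\<xi>. dual_br \<delta> \<xi> \<xi> = (\<lambda>i. 0)"
  shows "\<delta> (bas i) j k = - \<delta> (bas i) k j"
proof -
  have "dual_br \<delta> \<xi> \<xi> i = 0" for \<xi>
    using assms by simp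
  from this[of "bas j"] this[of "bas k"] this[of "\<lambda>t. bas j t + bas k t"] show ?thesis
    by (simp add: dual_br_def algebra_simps sum.distrib bas_mult_simps)
qed

lemma cocycle_weight_vanishing:
  assumes "linear_delta \<delta>" and "cocycle \<delta>" and "\<delta> (bas N) = (\<lambda>j k. 0)"
    and "weight y \<noteq> weight j + weight k"
  shows "\<delta> (bas y) j k = 0"
proof -
  have "weight y * \<delta> (bas y) j k = (weight j + weight k) * \<delta> (bas y) j k"
    using cocycle_bas[OF assms(1,2), of N y j k] assms(3)
    by (simp add: adt_bas brb_N_weight bas_mult_simps algebra_simps)
  with assms(4) show ?thesis
    by simp
qed

lemma cob_rr_N: "cob (rr c1 c2) (bas N) = (\<lambda>j k. 0)"
  by (intro ext, simp add: cob_def adt_bas sum_UNIV_gen rr_def wedge_def bas_apply split: gen.split)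

lemma cob_rr_M: "cob (rr c1 c2) (bas M) = (\<lambda>j k. 0)"
  by (intro ext, simp add: cob_def adt_bas sum_UNIV_gen rr_def wedge_def bas_apply split: gen.split)

lemma cob_rr_Ap: "cob (rr c1 c2) (bas Ap) = (\<lambda>j k. - (c1 + c2) * wedge (bas Ap) (bas M) j k)"
  by (intro ext, simp add: cob_def adt_bas sum_UNIV_gen rr_def wedge_def bas_apply split: gen.split)

lemma cob_rr_Am: "cob (rr c1 c2) (bas Am) = (\<lambda>j k. (c1 - c2) * wedge (bas Am) (bas M) j k)"
  by (intro ext, simp add: cob_def adt_bas sum_UNIV_gen rr_def wedge_def bas_apply split: gen.split)

lemma cob_rr_Bp: "cob (rr c1 c2) (bas Bp) = (\<lambda>j k. - 2 * c1 * wedge (bas Bp) (bas M) j k)"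
  by (intro ext, simp add: cob_def adt_bas sum_UNIV_gen rr_def wedge_def bas_apply split: gen.split)

lemma cob_rr_Bm: "cob (rr c1 c2) (bas Bm) = (\<lambda>j k. 2 * c1 * wedge (bas Bm) (bas M) j k)"
  by (intro ext, simp add: cob_def adt_bas sum_UNIV_gen rr_def wedge_def bas_apply split: gen.split)

lemmas cob_rr_bas = cob_rr_N cob_rr_M cob_rr_Ap cob_rr_Am cob_rr_Bp cob_rr_Bm

lemma schouten_rr: "schouten (rr c1 c2) = (\<lambda>x y z. - (c2 ^ 2) * wedge3 (bas Ap) (bas Am) (bas M) x y z)"
  by (intro ext, simp add: schouten_eq sum_UNIV_gen rr_def wedge_def wedge3_def bas_apply power2_eq_square
      split: gen.split)

lemma adt3_wedge3_Ap_Am_M: "adt3 X (\<lambda>x y z. c * wedge3 (bas Ap) (bas Am) (bas M) x y z) = (\<lambda>x y z. 0)"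
  by (intro ext, simp add: adt3_def lie_bas_right sum_UNIV_gen wedge3_def bas_apply split: gen.split)

(* Together with the coboundaries of rr it spans the skew cocycles vanishing on N; only the
   Jacobi identity of the dual bracket rules it out. *)
fun extra_cocycle :: "gen \<Rightarrow> tensor2" where
  "extra_cocycle Ap = (\<lambda>j k. (wedge (bas Ap) (bas M) j k + wedge (bas Bp) (bas Am) j k) / 2)"
| "extra_cocycle Am = (\<lambda>j k. wedge (bas Bm) (bas Ap) j k / 2)"
| "extra_cocycle Bp = (\<lambda>j k. wedge (bas Bp) (bas N) j k + wedge (bas Bp) (bas M) j k)"
| "extra_cocycle Bm = (\<lambda>j k. wedge (bas Bm) (bas N) j k)"
| "extra_cocycle _ = (\<lambda>j k. 0)"

lemma graded_skew_cocycle_decomposition: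
  assumes lin: "linear_delta \<delta>" and coc: "cocycle \<delta>" and N0: "\<delta> (bas N) = (\<lambda>j k. 0)"
    and skew: "\<And>i j k. \<delta> (bas i) j k = - \<delta> (bas i) k j"
  shows "\<exists>c1 c2 p. \<forall>x. \<delta> (bas x) = (\<lambda>j k. cob (rr c1 c2) (bas x) j k + p * extra_cocycle x j k)"
proof -
  note vanish = cocycle_weight_vanishing[OF lin coc N0]
  (* With the grading and skew-symmetry, these ten cocycle identities already determine every
     entry in terms of the three parameters a, b, p below. *)
  note eqs = cocycle_bas[OF lin coc, of Ap Am N M] cocycle_bas[OF lin coc, of Ap Am Ap Am]
    cocycle_bas[OF lin coc, of Ap Am Bp Bm] cocycle_bas[OF lin coc, of Ap Bp Ap Bp]
    cocycle_bas[OF lin coc, of Ap Bm N Am] cocycle_bas[OF lin coc, of Ap Bm Ap Bm]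
    cocycle_bas[OF lin coc, of Ap Bm Am M] cocycle_bas[OF lin coc, of Ap M Ap M]
    cocycle_bas[OF lin coc, of Am Bp Ap M] cocycle_bas[OF lin coc, of Am Bp Am Bp]
  have diag: "\<delta> (bas i) j j = 0" for i j
    using skew[of i j j] by simp
  note [simp] = bas_apply weight_def vanish N0 diag
    skew[of Ap Ap N] skew[of Ap Ap M] skew[of Ap Bp Am] skew[of Am Am N] skew[of Am Am M]
    skew[of Am Bm Ap] skew[of Bp Bp N] skew[of Bp Bp M] skew[of Bm N Bm] skew[of Bm Bm M]
    skew[of M M N] skew[of M Am Ap] skew[of M Bm Bp]
  note lin_eqs = eqs[unfolded adt_bas sum_UNIV_gen, simplified]
  define a b p where "a = \<delta> (bas Am) M Am" and "b = \<delta> (bas Bm) M Bm" and "p = \<delta> (bas Bm) Bm N"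
  have entries:
    "\<delta> (bas Ap) N Ap = 0" "\<delta> (bas Ap) M Ap = a - p / 2 - b" "\<delta> (bas Ap) Am Bp = - p / 2"
    "\<delta> (bas Am) N Am = 0" "\<delta> (bas Am) Ap Bm = - p / 2"
    "\<delta> (bas Bp) N Bp = - p" "\<delta> (bas Bp) M Bp = - p - b"
    "\<delta> (bas M) N M = 0" "\<delta> (bas M) Ap Am = 0" "\<delta> (bas M) Bp Bm = 0"
    using lin_eqs unfolding a_def b_def p_def by linarith+
  have "\<delta> (bas x) j k = cob (rr (- b / 2) (a - b / 2)) (bas x) j k + p * extra_cocycle x j k" for x j k
    by (cases x; cases j; cases k)
      (simp_all add: entries a_def [symmetric] b_def [symmetric] p_def [symmetric]
        cob_rr_bas wedge_def)
  then show ?thesis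
    by blast
qed

lemma dual_jacobi_excludes_extra_cocycle:
  assumes "dual_is_lie \<delta>"
    and decomposition: "\<And>x. \<delta> (bas x) = (\<lambda>j k. cob (rr c1 c2) (bas x) j k + p * extra_cocycle x j k)"
  shows "p = 0"
proof -
  have "dual_br \<delta> (bas N) (dual_br \<delta> (bas Ap) (bas Bm)) Am + dual_br \<delta> (bas Ap) (dual_br \<delta> (bas Bm) (bas N)) Am
      + dual_br \<delta> (bas Bm) (dual_br \<delta> (bas N) (bas Ap)) Am = 0"
    using assms(1) unfolding dual_is_lie_def by metis
  then have "p * p = 0"
    by (simp add: dual_br_bas sum_UNIV_gen decomposition cob_rr_bas wedge_def bas_apply algebra_simps)
  then show ?thesis
    by simp
qed

lemma lie_bialgebra_coboundary_if_N_zero: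
  assumes "lie_bialgebra \<delta>" and N0: "\<delta> (bas N) = (\<lambda>j k. 0)"
  shows "\<exists>c1 c2. \<forall>X. \<delta> X = cob (rr c1 c2) X"
proof -
  have lin: "linear_delta \<delta>" and coc: "cocycle \<delta>" and dual: "dual_is_lie \<delta>"
    using assms(1) unfolding lie_bialgebra_def by auto
  have skew: "\<delta> (bas i) j k = - \<delta> (bas i) k j" for i j k
    using dual by (intro dual_br_alternating_imp_skew) (simp add: dual_is_lie_def)
  obtain c1 c2 p
    where decomposition: "\<And>x. \<delta> (bas x) = (\<lambda>j k. cob (rr c1 c2) (bas x) j k + p * extra_cocycle x j k)"
    using graded_skew_cocycle_decomposition[OF lin coc N0 skew] by blast
  have "p = 0"
    using dual_jacobi_excludes_extra_cocycle[OF dual decomposition] .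
  have "\<delta> X j k = cob (rr c1 c2) X j k" for X j k
    by (simp add: linear_delta_expand[OF lin] cob_expand[of "rr c1 c2" X] decomposition \<open>p = 0\<close>)
  then show ?thesis
    by blast
qed

lemma scaled_wedge3_Ap_Am_M_eq_zero_iff:
  "(\<lambda>x y z. c * wedge3 (bas Ap) (bas Am) (bas M) x y z) = (\<lambda>x y z. 0) \<longleftrightarrow> c = 0"
proof
  assume "(\<lambda>x y z. c * wedge3 (bas Ap) (bas Am) (bas M) x y z) = (\<lambda>x y z. 0)"
  then have "c * wedge3 (bas Ap) (bas Am) (bas M) Ap Am M = 0"
    by metis
  then show "c = 0"
    by (simp add: wedge3_def bas_apply)
qed simp

theorem mainTheorem1:
  shows
   "(\<forall>\<delta>. lie_bialgebra \<delta> \<longrightarrow>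
        (\<delta> (bas N) = (\<lambda>j k. 0) \<longleftrightarrow>
           (\<exists>c1 c2. \<forall>X. \<delta> X = cob (rr c1 c2) X)))
    \<and> (\<forall>c1 c2.
        cob (rr c1 c2) (bas N) = (\<lambda>j k. 0)
      \<and> cob (rr c1 c2) (bas M) = (\<lambda>j k. 0)
      \<and> cob (rr c1 c2) (bas Ap) = (\<lambda>j k. - (c1 + c2) * wedge (bas Ap) (bas M) j k)
      \<and> cob (rr c1 c2) (bas Am) = (\<lambda>j k. (c1 - c2) * wedge (bas Am) (bas M) j k)
      \<and> cob (rr c1 c2) (bas Bp) = (\<lambda>j k. - 2 * c1 * wedge (bas Bp) (bas M) j k)
      \<and> cob (rr c1 c2) (bas Bm) = (\<lambda>j k. 2 * c1 * wedge (bas Bm) (bas M) j k)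
      \<and> schouten (rr c1 c2) = (\<lambda>x y z. - (c2 ^ 2) * wedge3 (bas Ap) (bas Am) (bas M) x y z)
      \<and> (CYBE (rr c1 c2) \<longleftrightarrow> c2 = 0)
      \<and> (standard_r (rr c1 c2) \<longleftrightarrow> c2 \<noteq> 0))"
proof -
  have "lie_bialgebra \<delta> \<Longrightarrow> \<delta> (bas N) = (\<lambda>j k. 0) \<longleftrightarrow> (\<exists>c1 c2. \<forall>X. \<delta> X = cob (rr c1 c2) X)" for \<delta>
    using lie_bialgebra_coboundary_if_N_zero cob_rr_N by metis
  moreover have "CYBE (rr c1 c2) \<longleftrightarrow> c2 = 0" for c1 c2
    unfolding CYBE_def schouten_rr scaled_wedge3_Ap_Am_M_eq_zero_iff by simp
  moreover have "standard_r (rr c1 c2) \<longleftrightarrow> c2 \<noteq> 0" for c1 c2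
    unfolding standard_r_def schouten_rr scaled_wedge3_Ap_Am_M_eq_zero_iff adt3_wedge3_Ap_Am_M by simp
  ultimately show ?thesis
    by (simp add: cob_rr_bas schouten_rr)
qed

end
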